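(* Let $R$ be a ring with a nice topology. If $R$ is Dedekind-finite and (von Neumann) regular, then $R$ is a full exchange ring.
   Context: $R$ is Dedekind-finite if $xy=1$ implies $yx=1$; regular means every $x$ satisfies $x=xyx$ for some $y$. A linear Hausdorff topology on $R$ is a ring topology with a basis $\mathfrak U$ of neighborhoods of $0$ consisting of left ideals, with $\bigcap_{U\in\mathfrak U}U=0$. A family $\{x_i\}_{i\in I}\subseteq R$ is summable to $r$ if for every $U\in\mathfrak U$ there is a finite $F'\subseteq I$ with $\sum_{i\in F}x_i-r\in U$ for all finite $F$ with $F'\subseteq F\subseteq I$ (write $\sum_{i\in I}x_i=r$; the family is then called summable). The topology is nice if it is linear, Hausdorff, and for every summable family $\{x_i\}_{i\in I}$ and every family $\{r_i\}_{i\in I}\subseteq R$ the family $\{r_ix_i\}_{i\in I}$ is summable. For a cardinal $\aleph$, $R$ is an $\aleph$-exchange ring if for every family $\{x_i\}_{i\in I}$ with $|I|\le\aleph$ summable to $1$ there exist pairwise orthogonal idempotents $e_i\in Rx_i$ forming a summable family with $\sum_{i\in I}e_i=1$; $R$ is a full exchange ring if it is an $\aleph$-exchange ring for every cardinal $\aleph$. *)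

theory Defs
  imports Main
begin

definition left_ideal :: "'a::ring_1 set \<Rightarrow> bool" where
  "left_ideal L \<longleftrightarrow> 0 \<in> L \<and> (\<forall>a\<in>L. \<forall>b\<in>L. a - b \<in> L) \<and> (\<forall>r a. a \<in> L \<longrightarrow> r * a \<in> L)"

text \<open>U is a basis of neighbourhoods of 0 of a ring topology, consisting of left
  ideals (filter base; continuity of right multiplication by fixed elements;
  the other ring-topology axioms are automatic for left ideals), and Hausdorff.\<close>
definition linear_hausdorff :: "'a::ring_1 set set \<Rightarrow> bool" where
  "linear_hausdorff U \<longleftrightarrow>
     U \<noteq> {} \<and>
     (\<forall>V\<in>U. left_ideal V) \<and>
     (\<forall>V\<in>U. \<forall>W\<in>U. \<exists>Z\<in>U. Z \<subseteq> V \<inter> W) \<and>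
     (\<forall>V\<in>U. \<forall>x. \<exists>W\<in>U. (\<lambda>w. w * x) ` W \<subseteq> V) \<and>
     \<Inter> U = {0}"

definition sums_to :: "'a::ring_1 set set \<Rightarrow> ('i \<Rightarrow> 'a) \<Rightarrow> 'i set \<Rightarrow> 'a \<Rightarrow> bool" where
  "sums_to U x I r \<longleftrightarrow>
     (\<forall>V\<in>U. \<exists>F'. finite F' \<and> F' \<subseteq> I \<and>
        (\<forall>F. finite F \<and> F' \<subseteq> F \<and> F \<subseteq> I \<longrightarrow> sum x F - r \<in> V))"

definition summable_fam :: "'a::ring_1 set set \<Rightarrow> ('i \<Rightarrow> 'a) \<Rightarrow> 'i set \<Rightarrow> bool" where
  "summable_fam U x I \<longleftrightarrow> (\<exists>r. sums_to U x I r)"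

definition nice_idx :: "'a::ring_1 set set \<Rightarrow> 'i itself \<Rightarrow> bool" where
  "nice_idx U _ \<longleftrightarrow> linear_hausdorff U \<and>
     (\<forall>(I::'i set) x rs. summable_fam U x I \<longrightarrow> summable_fam U (\<lambda>i. rs i * x i) I)"

definition exchange_idx :: "'a::ring_1 set set \<Rightarrow> 'i itself \<Rightarrow> bool" where
  "exchange_idx U _ \<longleftrightarrow>
     (\<forall>(I::'i set) x. sums_to U x I 1 \<longrightarrow>
        (\<exists>e. (\<forall>i\<in>I. \<exists>r. e i = r * x i) \<and>
             (\<forall>i\<in>I. e i * e i = e i) \<and>
             (\<forall>i\<in>I. \<forall>j\<in>I. i \<noteq> j \<longrightarrow> e i * e j = 0) \<and>
             sums_to U e I 1))"

definition dedekind_finite :: "'a::ring_1 itself \<Rightarrow> bool" where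
  "dedekind_finite _ \<longleftrightarrow> (\<forall>x y::'a. x * y = 1 \<longrightarrow> y * x = 1)"

definition vn_regular :: "'a::ring_1 itself \<Rightarrow> bool" where
  "vn_regular _ \<longleftrightarrow> (\<forall>x::'a. \<exists>y. x = x * y * x)"

end

theory Submission
  imports Defs
begin

(* Well-order the index set and build idempotents h_i \<in> R x_i by transfinite recursion, in the
  manner of Gram-Schmidt: if u is the sum of the earlier h_k and f = w u is an idempotent with
  R u = R f (regularity), then h_i is an idempotent with f h_i = 0 and x_i \<in> R f + R h_i.
  Principal left ideals R f are closed under convergent sums, being left annihilators of 1 - f.
  Hence h_i h_j = 0 for i < j, every h_k and then every x_i lies in R u for the total sum
  u = \<Sum> h_k, and so 1 = \<Sum> x_i \<in> R u. By Dedekind-finiteness the left inverse v of u is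
  two-sided, and the e_i = v h_i are the required orthogonal idempotents. *)

lemma left_ideal_zero: "left_ideal L \<Longrightarrow> 0 \<in> L"
  and left_ideal_diff: "left_ideal L \<Longrightarrow> a \<in> L \<Longrightarrow> b \<in> L \<Longrightarrow> a - b \<in> L"
  and left_ideal_mult: "left_ideal L \<Longrightarrow> a \<in> L \<Longrightarrow> c * a \<in> L"
  by (simp_all add: left_ideal_def)

lemma left_ideal_add: "left_ideal L \<Longrightarrow> a \<in> L \<Longrightarrow> b \<in> L \<Longrightarrow> a + b \<in> L"
  using left_ideal_diff[of L a "0 - b"] left_ideal_diff[of L 0 b] left_ideal_zero[of L] by simp

definition principal_left_ideal :: "'a::ring_1 \<Rightarrow> 'a set" where
  "principal_left_ideal u = range (\<lambda>a. a * u)"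

lemma principal_left_ideal_iff: "s \<in> principal_left_ideal u \<longleftrightarrow> (\<exists>a. s = a * u)"
  by (auto simp: principal_left_ideal_def)

lemma left_ideal_principal_left_ideal: "left_ideal (principal_left_ideal u)"
  unfolding left_ideal_def principal_left_ideal_def
proof (intro conjI ballI allI impI)
  show "0 \<in> range (\<lambda>a. a * u)" by (rule range_eqI[where x = 0]) simp
next
  fix s t assume "s \<in> range (\<lambda>a. a * u)" "t \<in> range (\<lambda>a. a * u)"
  then show "s - t \<in> range (\<lambda>a. a * u)" by (auto simp: left_diff_distrib[symmetric])
next
  fix c s assume "s \<in> range (\<lambda>a. a * u)"
  then show "c * s \<in> range (\<lambda>a. a * u)" by (auto simp: mult.assoc[symmetric])
qed

lemma principal_left_ideal_trans:
  "a \<in> principal_left_ideal b \<Longrightarrow> b \<in> principal_left_ideal c \<Longrightarrow> a \<in> principal_left_ideal c"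
  unfolding principal_left_ideal_iff by (metis mult.assoc)

definition regular_idem :: "'a::ring_1 \<Rightarrow> 'a" where
  "regular_idem u = (SOME w. u = u * w * u) * u"

lemma
  assumes "vn_regular TYPE('a::ring_1)"
  shows mult_regular_idem: "u * regular_idem u = u"
    and regular_idem_mem: "regular_idem u \<in> principal_left_ideal (u::'a)"
proof -
  have "\<exists>w. u = u * w * u"
    using assms unfolding vn_regular_def by blast
  then have "u = u * (SOME w. u = u * w * u) * u"
    by (rule someI_ex)
  then show "u * regular_idem u = u"
    by (simp add: regular_idem_def mult.assoc)
  show "regular_idem u \<in> principal_left_ideal u"
    by (auto simp: regular_idem_def principal_left_ideal_def)
qed

lemma principal_left_ideal_mult_regular_idem:
  assumes "vn_regular TYPE('a::ring_1)" and "(a::'a) \<in> principal_left_ideal u"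
  shows "a * regular_idem u = a"
proof -
  obtain c where "a = c * u" using assms(2) by (auto simp: principal_left_ideal_iff)
  then show ?thesis using mult_regular_idem[OF assms(1)] by (simp add: mult.assoc)
qed

lemma regular_idem_idem:
  assumes "vn_regular TYPE('a::ring_1)"
  shows "regular_idem (u::'a) * regular_idem u = regular_idem u"
  using assms regular_idem_mem principal_left_ideal_mult_regular_idem by blast

lemma sums_to_eventually:
  "sums_to U x I r \<longleftrightarrow> (\<forall>V\<in>U. \<forall>\<^sub>F F in finite_subsets_at_top I. sum x F - r \<in> V)"
  by (simp add: sums_to_def eventually_finite_subsets_at_top)

lemma sums_to_cong:
  assumes "\<And>i. i \<in> I \<Longrightarrow> x i = y i"
  shows "sums_to U x I r \<longleftrightarrow> sums_to U y I r"
proof -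
  have "sum x F = sum y F" if "F \<subseteq> I" for F
    using assms that by (intro sum.cong) auto
  then have "\<forall>\<^sub>F F in finite_subsets_at_top I. (sum x F - r \<in> V) = (sum y F - r \<in> V)" for V
    by (intro eventually_finite_subsets_at_top_weakI) simp
  then have "(\<forall>\<^sub>F F in finite_subsets_at_top I. sum x F - r \<in> V) \<longleftrightarrow>
      (\<forall>\<^sub>F F in finite_subsets_at_top I. sum y F - r \<in> V)" for V
    by (rule eventually_subst)
  then show ?thesis
    unfolding sums_to_eventually by simp
qed

definition tsum :: "'a::ring_1 set set \<Rightarrow> ('i \<Rightarrow> 'a) \<Rightarrow> 'i set \<Rightarrow> 'a" where
  "tsum U x I = (THE r. sums_to U x I r)"

locale linear_hausdorff_topology =
  fixes U :: "'a::ring_1 set set"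
  assumes linear_hausdorff: "linear_hausdorff U"
begin

lemma basis_left_ideal: "V \<in> U \<Longrightarrow> left_ideal V"
  using linear_hausdorff by (simp add: linear_hausdorff_def)

lemma basis_mult_right: "V \<in> U \<Longrightarrow> \<exists>W\<in>U. \<forall>w\<in>W. w * c \<in> V"
  using linear_hausdorff unfolding linear_hausdorff_def by (simp add: image_subset_iff)

lemma eq_zero_if_mem_basis: "(\<And>V. V \<in> U \<Longrightarrow> a \<in> V) \<Longrightarrow> a = 0"
  using linear_hausdorff unfolding linear_hausdorff_def by (metis InterI singletonD)

lemma sums_to_unique:
  assumes "sums_to U x I r" and "sums_to U x I s"
  shows "r = s"
proof -
  have "r - s \<in> V" if V: "V \<in> U" for V
  proof -
    have "\<forall>\<^sub>F F in finite_subsets_at_top I. sum x F - s \<in> V \<and> sum x F - r \<in> V"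
      using assms V by (simp add: sums_to_eventually eventually_conj)
    then obtain F where "sum x F - s \<in> V" "sum x F - r \<in> V"
      using eventually_happens'[OF finite_subsets_at_top_neq_bot] by blast
    then have "(sum x F - s) - (sum x F - r) \<in> V"
      using basis_left_ideal[OF V] by (rule left_ideal_diff[rotated])
    then show ?thesis by simp
  qed
  then have "r - s = 0" by (rule eq_zero_if_mem_basis)
  then show ?thesis by simp
qed

lemma tsum_eqI: "sums_to U x I r \<Longrightarrow> tsum U x I = r"
  unfolding tsum_def using sums_to_unique by blast

lemma sums_to_tsum: "summable_fam U x I \<Longrightarrow> sums_to U x I (tsum U x I)"
  unfolding summable_fam_def using tsum_eqI by metis

lemma sums_to_zero: "sums_to U (\<lambda>_. 0) I 0"
  unfolding sums_to_eventually using basis_left_ideal left_ideal_zero by auto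

lemma sums_to_delta:
  assumes "i \<in> I"
  shows "sums_to U (\<lambda>k. if k = i then a else 0) I a"
proof -
  have "\<forall>\<^sub>F F in finite_subsets_at_top I. i \<in> F \<and> finite F"
    using assms by (auto simp: eventually_finite_subsets_at_top intro!: exI[of _ "{i}"])
  then show ?thesis
    unfolding sums_to_eventually
    by (auto elim!: eventually_mono simp: left_ideal_zero basis_left_ideal)
qed

lemma sums_to_add:
  assumes "sums_to U x I r" and "sums_to U y I s"
  shows "sums_to U (\<lambda>i. x i + y i) I (r + s)"
  unfolding sums_to_eventually
proof
  fix V assume V: "V \<in> U"
  have "\<forall>\<^sub>F F in finite_subsets_at_top I. sum x F - r \<in> V \<and> sum y F - s \<in> V"
    using assms V by (simp add: sums_to_eventually eventually_conj)
  then show "\<forall>\<^sub>F F in finite_subsets_at_top I. (\<Sum>i\<in>F. x i + y i) - (r + s) \<in> V"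
  proof (rule eventually_mono)
    fix F assume "sum x F - r \<in> V \<and> sum y F - s \<in> V"
    then have "(sum x F - r) + (sum y F - s) \<in> V"
      using left_ideal_add[OF basis_left_ideal[OF V]] by blast
    then show "(\<Sum>i\<in>F. x i + y i) - (r + s) \<in> V"
      by (simp add: sum.distrib algebra_simps)
  qed
qed

lemma sums_to_mult_left:
  assumes "sums_to U x I r"
  shows "sums_to U (\<lambda>i. c * x i) I (c * r)"
  unfolding sums_to_eventually
proof
  fix V assume V: "V \<in> U"
  have "\<forall>\<^sub>F F in finite_subsets_at_top I. sum x F - r \<in> V"
    using assms V by (simp add: sums_to_eventually)
  then show "\<forall>\<^sub>F F in finite_subsets_at_top I. (\<Sum>i\<in>F. c * x i) - c * r \<in> V"
    by (rule eventually_mono)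
      (simp add: left_ideal_mult[OF basis_left_ideal[OF V]] sum_distrib_left[symmetric]
        right_diff_distrib[symmetric])
qed

lemma sums_to_mult_right:
  assumes "sums_to U x I r"
  shows "sums_to U (\<lambda>i. x i * c) I (r * c)"
  unfolding sums_to_eventually
proof
  fix V assume "V \<in> U"
  then obtain W where W: "W \<in> U" "\<forall>w\<in>W. w * c \<in> V" using basis_mult_right by blast
  have "\<forall>\<^sub>F F in finite_subsets_at_top I. sum x F - r \<in> W"
    using assms W(1) by (simp add: sums_to_eventually)
  then show "\<forall>\<^sub>F F in finite_subsets_at_top I. (\<Sum>i\<in>F. x i * c) - r * c \<in> V"
    by (rule eventually_mono)
      (simp add: W(2) sum_distrib_right[symmetric] left_diff_distrib[symmetric])
qed

(* R u is the left annihilator of 1 - regular_idem u, which is closed because right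
  multiplication is continuous. *)
lemma sums_to_mem_principal_left_ideal:
  assumes "vn_regular TYPE('a)" and "sums_to U t I s"
    and "\<And>i. i \<in> I \<Longrightarrow> t i \<in> principal_left_ideal u"
  shows "s \<in> principal_left_ideal u"
proof -
  define f where "f = regular_idem u"
  have "sums_to U (\<lambda>i. t i * (1 - f)) I (s * (1 - f))"
    using assms(2) by (rule sums_to_mult_right)
  moreover have "t i * (1 - f) = 0" if "i \<in> I" for i
    using principal_left_ideal_mult_regular_idem[OF assms(1) assms(3)[OF that]]
    by (simp add: f_def right_diff_distrib)
  ultimately have "sums_to U (\<lambda>_. 0) I (s * (1 - f))"
    using sums_to_cong[of I "\<lambda>i. t i * (1 - f)" "\<lambda>_. 0"] by simp
  then have "s * (1 - f) = 0" using sums_to_zero sums_to_unique by blast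
  then have "s = s * f" by (simp add: right_diff_distrib)
  with regular_idem_mem[OF assms(1), of u] show ?thesis
    unfolding f_def by (metis left_ideal_mult left_ideal_principal_left_ideal)
qed

end

lemma nice_summable:
  fixes x g :: "'i \<Rightarrow> 'a::ring_1"
  assumes "nice_idx U TYPE('i)" and "summable_fam U x I"
    and "\<And>i. i \<in> I \<Longrightarrow> g i \<in> principal_left_ideal (x i)"
  shows "summable_fam U g I"
proof -
  obtain c where c: "\<And>i. i \<in> I \<Longrightarrow> g i = c i * x i"
    using assms(3) unfolding principal_left_ideal_iff by (meson bchoice)
  have "summable_fam U (\<lambda>i. c i * x i) I"
    using assms(1,2) unfolding nice_idx_def by blast
  then show ?thesis
    unfolding summable_fam_def using sums_to_cong[of I g "\<lambda>i. c i * x i", OF c] by blast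
qed

lemma orth_step_identities:
  fixes f x w :: "'a::ring_1"
  defines "z \<equiv> x * (1 - f)" and "t \<equiv> (1 - f) * w"
  assumes "f * f = f" and "z * w * z = z"
  shows "f * (t * z * t * x) = 0"
    and "(t * z * t * x) * (t * z * t * x) = t * z * t * x"
    and "z * (t * z * t * x) * (1 - f) = z"
proof -
  have f_1f: "f * (1 - f) = 0" and "(1 - f) * (1 - f) = 1 - f"
    using assms(3) by (simp_all add: algebra_simps)
  then have "z * (1 - f) = z"
    by (simp add: z_def mult.assoc)
  then have ztz: "z * t * z = z"
    using assms(4) by (metis t_def mult.assoc)
  have xtz: "x * t * z = z"
    using assms(4) by (simp add: z_def t_def mult.assoc)
  have ft: "f * t = 0"
    using f_1f by (simp add: t_def mult.assoc[symmetric])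
  show "f * (t * z * t * x) = 0"
    using ft by (simp add: mult.assoc[symmetric])
  have "(t * z * t * x) * (t * z * t * x) = t * z * t * (x * t * z) * t * x"
    by (simp add: mult.assoc)
  also have "\<dots> = t * (z * t * z) * t * x"
    using xtz by (simp add: mult.assoc)
  finally show "(t * z * t * x) * (t * z * t * x) = t * z * t * x"
    using ztz by simp
  have "z * (t * z * t * x) * (1 - f) = (z * t * z) * t * z"
    by (simp add: z_def mult.assoc)
  then show "z * (t * z * t * x) * (1 - f) = z"
    using ztz by simp
qed

(* With f = regular_idem u and z = x (1 - f), the element t z is an idempotent generating R z
  with f t z = 0; multiplying it by t x on the right moves it into R x. *)
definition orth_step :: "'a::ring_1 \<Rightarrow> 'a \<Rightarrow> 'a" where
  "orth_step u x =
     (let f = regular_idem u; z = x * (1 - f); t = (1 - f) * (SOME w. z = z * w * z)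
      in t * z * t * x)"

lemma orth_step_mem: "orth_step u x \<in> principal_left_ideal x"
  unfolding orth_step_def Let_def principal_left_ideal_iff by blast

lemma
  assumes "vn_regular TYPE('a::ring_1)"
  shows regular_idem_mult_orth_step: "regular_idem u * orth_step u x = 0"
    and orth_step_idem: "orth_step u x * orth_step u x = orth_step u (x::'a)"
    and orth_step_recovers:
      "x * (1 - regular_idem u) * orth_step u x * (1 - regular_idem u) = x * (1 - regular_idem u)"
proof -
  define f where "f = regular_idem u"
  define z where "z = x * (1 - f)"
  define w where "w = (SOME w. z = z * w * z)"
  have "\<exists>w. z = z * w * z"
    using assms unfolding vn_regular_def by blast
  then have "z * w * z = z"
    unfolding w_def by (rule someI_ex[where P = "\<lambda>w. z = z * w * z", THEN sym])
  note identities = orth_step_identities[OF regular_idem_idem[OF assms] this[unfolded z_def f_def]]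
  have step: "orth_step u x = (1 - f) * w * z * ((1 - f) * w) * x"
    unfolding orth_step_def Let_def w_def z_def f_def ..
  show "regular_idem u * orth_step u x = 0"
    "orth_step u x * orth_step u x = orth_step u x"
    "x * (1 - regular_idem u) * orth_step u x * (1 - regular_idem u) = x * (1 - regular_idem u)"
    using identities unfolding step z_def f_def by simp_all
qed

lemma mem_left_ideal_if_orth_step_mem:
  assumes "vn_regular TYPE('a::ring_1)" and L: "left_ideal L"
    and "regular_idem u \<in> L" and "orth_step u (x::'a) \<in> L"
  shows "x \<in> L"
proof -
  define f where "f = regular_idem u"
  define h where "h = orth_step u x"
  have "x = x * f + x * (1 - f) * h * (1 - f)"
    using orth_step_recovers[OF assms(1)] by (simp add: f_def h_def algebra_simps)
  also have "\<dots> = x * f + ((x * (1 - f)) * h - (x * (1 - f) * h) * f)"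
    by (simp add: algebra_simps)
  finally show ?thesis
    using assms(3,4) unfolding f_def[symmetric] h_def[symmetric]
    by (metis L left_ideal_add left_ideal_diff left_ideal_mult)
qed

(* The terms not preceding i are replaced by 0 rather than dropped, so that every sum is
  indexed by I. *)
definition orth_family ::
    "'a::ring_1 set set \<Rightarrow> ('i \<times> 'i) set \<Rightarrow> 'i set \<Rightarrow> ('i \<Rightarrow> 'a) \<Rightarrow> 'i \<Rightarrow> 'a" where
  "orth_family U r I x =
     wfrec r (\<lambda>h i. orth_step (tsum U (\<lambda>k. if (k, i) \<in> r then h k else 0) I) (x i))"

lemma orth_family_unfold:
  assumes "wf r"
  shows "orth_family U r I x i =
    orth_step (tsum U (\<lambda>k. if (k, i) \<in> r then orth_family U r I x k else 0) I) (x i)"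
  unfolding orth_family_def by (subst wfrec[OF assms]) (simp add: cut_apply cong: if_cong)

context
  fixes U :: "'a::ring_1 set set" and r :: "('i \<times> 'i) set" and I :: "'i set" and x :: "'i \<Rightarrow> 'a"
  assumes nice: "nice_idx U TYPE('i)" and regular: "vn_regular TYPE('a)"
    and wf: "wf r" and total: "total r" and sums_one: "sums_to U x I 1"
begin

abbreviation h :: "'i \<Rightarrow> 'a" where "h \<equiv> orth_family U r I x"

definition partial_sum :: "'i set \<Rightarrow> 'a" where
  "partial_sum J = tsum U (\<lambda>k. if k \<in> J then h k else 0) I"

interpretation linear_hausdorff_topology U
  using nice by unfold_locales (simp add: nice_idx_def)

lemma r_total: "a \<noteq> b \<Longrightarrow> (a, b) \<in> r \<or> (b, a) \<in> r"
  using total by (simp add: total_on_def)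

lemma h_mem: "h i \<in> principal_left_ideal (x i)"
  using orth_family_unfold[OF wf] orth_step_mem by metis

lemma h_idem: "h i * h i = h i"
  using orth_family_unfold[OF wf] orth_step_idem[OF regular] by metis

lemma h_unfold: "h i = orth_step (partial_sum {k. (k, i) \<in> r}) (x i)"
  unfolding partial_sum_def using orth_family_unfold[OF wf] by simp

lemma summable_left_multiples:
  "(\<And>i. i \<in> I \<Longrightarrow> g i \<in> principal_left_ideal (x i)) \<Longrightarrow> summable_fam U g I"
  using nice_summable[OF nice] sums_one unfolding summable_fam_def by blast

lemma sums_to_partial_sum: "sums_to U (\<lambda>k. if k \<in> J then h k else 0) I (partial_sum J)"
  unfolding partial_sum_def
  by (intro sums_to_tsum summable_left_multiples)
    (simp add: h_mem left_ideal_zero[OF left_ideal_principal_left_ideal])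

lemma h_mult_restrict_eq:
  assumes tri: "\<And>k k'. k \<in> J \<inter> I \<Longrightarrow> k' \<in> J \<inter> I \<Longrightarrow> (k, k') \<in> r \<Longrightarrow> h k * h k' = 0"
    and "k \<in> J \<inter> I" and "j \<in> I"
  shows "h k * (if j \<in> J then h j else 0) =
    (if j = k then h k else 0) + (if j \<in> J \<and> (j, k) \<in> r then h k * h j else 0)"
proof -
  have "h k * h j = 0" if "j \<in> J" "j \<noteq> k" "(j, k) \<notin> r"
    using tri[of k j] r_total[of k j] that assms(2,3) by blast
  then show ?thesis
    using h_idem[of k] wf_not_refl[OF wf, of k] assms(2) by auto
qed

lemma h_mem_partial_sum_if_triangular:
  assumes tri: "\<And>k k'. k \<in> J \<inter> I \<Longrightarrow> k' \<in> J \<inter> I \<Longrightarrow> (k, k') \<in> r \<Longrightarrow> h k * h k' = 0"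
  shows "k \<in> J \<inter> I \<Longrightarrow> h k \<in> principal_left_ideal (partial_sum J)"
  \<comment> \<open>h_k u = h_k + (the sum of the h_k h_j with j < k), which lies in R u by induction.\<close>
proof (induction k rule: wf_induct_rule[OF wf])
  case (1 k)
  define u where "u = partial_sum J"
  define below where "below j = (if j \<in> J \<and> (j, k) \<in> r then h k * h j else 0)" for j
  have lhs: "sums_to U (\<lambda>j. (if j = k then h k else 0) + below j) I (h k * u)"
    using sums_to_mult_left[OF sums_to_partial_sum[of J], where c = "h k"]
      sums_to_cong[of I "\<lambda>j. h k * (if j \<in> J then h j else 0)"
        "\<lambda>j. (if j = k then h k else 0) + below j" U "h k * u",
        OF h_mult_restrict_eq[OF tri 1(2), folded below_def]]
    unfolding u_def by blast
  obtain s where s: "sums_to U below I s"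
  proof -
    have "below j \<in> principal_left_ideal (x j)" for j
      by (simp add: below_def h_mem left_ideal_mult left_ideal_zero
        left_ideal_principal_left_ideal)
    then show ?thesis
      using summable_left_multiples that unfolding summable_fam_def by blast
  qed
  have "sums_to U (\<lambda>j. (if j = k then h k else 0) + below j) I (h k + s)"
    using 1(2) by (intro sums_to_add sums_to_delta s) simp
  with lhs have sum_eq: "h k * u = h k + s"
    by (rule sums_to_unique)
  have "s \<in> principal_left_ideal u"
  proof (rule sums_to_mem_principal_left_ideal[OF regular s])
    fix j assume "j \<in> I"
    then show "below j \<in> principal_left_ideal u"
      using 1 by (simp add: below_def u_def left_ideal_mult left_ideal_zero
        left_ideal_principal_left_ideal)
  qed
  moreover have "h k * u \<in> principal_left_ideal u"
    unfolding principal_left_ideal_iff by blast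
  ultimately have "h k * u - s \<in> principal_left_ideal u"
    using left_ideal_diff[OF left_ideal_principal_left_ideal] by blast
  then show ?case
    using sum_eq unfolding u_def by simp
qed

lemma h_triangular: "i \<in> I \<Longrightarrow> j \<in> I \<Longrightarrow> (i, j) \<in> r \<Longrightarrow> h i * h j = 0"
proof (induction j arbitrary: i rule: wf_induct_rule[OF wf])
  case (1 j)
  define u where "u = partial_sum {k. (k, j) \<in> r}"
  have "h i \<in> principal_left_ideal u"
    unfolding u_def using 1 by (intro h_mem_partial_sum_if_triangular) auto
  then have "h i * h j = h i * (regular_idem u * h j)"
    using principal_left_ideal_mult_regular_idem[OF regular] by (metis mult.assoc)
  also have "\<dots> = 0"
    unfolding u_def h_unfold[of j] regular_idem_mult_orth_step[OF regular] by simp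
  finally show ?case .
qed

lemma h_mem_partial_sum: "k \<in> J \<Longrightarrow> k \<in> I \<Longrightarrow> h k \<in> principal_left_ideal (partial_sum J)"
  by (intro h_mem_partial_sum_if_triangular h_triangular) auto

lemma partial_sum_mem: "J \<subseteq> J' \<Longrightarrow> partial_sum J \<in> principal_left_ideal (partial_sum J')"
  by (rule sums_to_mem_principal_left_ideal[OF regular sums_to_partial_sum])
    (auto simp: h_mem_partial_sum left_ideal_zero left_ideal_principal_left_ideal)

lemma x_mem_partial_sum: "i \<in> I \<Longrightarrow> x i \<in> principal_left_ideal (partial_sum UNIV)"
proof -
  assume "i \<in> I"
  define u' where "u' = partial_sum (insert i {k. (k, i) \<in> r})"
  have "regular_idem (partial_sum {k. (k, i) \<in> r}) \<in> principal_left_ideal u'"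
    unfolding u'_def
    by (rule principal_left_ideal_trans[OF regular_idem_mem[OF regular] partial_sum_mem]) auto
  moreover have "h i \<in> principal_left_ideal u'"
    unfolding u'_def using \<open>i \<in> I\<close> by (simp add: h_mem_partial_sum)
  ultimately have "x i \<in> principal_left_ideal u'"
    using mem_left_ideal_if_orth_step_mem[OF regular left_ideal_principal_left_ideal]
    unfolding h_unfold[of i] by blast
  then show ?thesis
    unfolding u'_def by (rule principal_left_ideal_trans[OF _ partial_sum_mem]) auto
qed

lemma one_mem_partial_sum: "1 \<in> principal_left_ideal (partial_sum UNIV)"
  by (rule sums_to_mem_principal_left_ideal[OF regular sums_one x_mem_partial_sum])

lemma sums_to_h: "sums_to U h I (partial_sum UNIV)"
  using sums_to_partial_sum[of UNIV] by simp

lemma h_mult_h_mult_eq: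
  assumes "i \<in> I" and "k \<in> I"
    and below: "(k, i) \<in> r \<Longrightarrow> h k * y = (if k = j then h j else 0)"
  shows "h i * h k * y =
    (if k = i then h i * y else 0) + (if k = j then if (j, i) \<in> r then h i * h j else 0 else 0)"
proof (cases "k = i")
  case True
  then show ?thesis
    using h_idem[of i] by (simp add: wf_not_refl[OF wf])
next
  case False
  then consider "(i, k) \<in> r" | "(k, i) \<in> r"
    using r_total by blast
  then show ?thesis
  proof cases
    case 1
    then show ?thesis
      using False h_triangular[OF assms(1,2)] wf_not_sym[OF wf, of i k] by auto
  next
    case 2
    then show ?thesis
      using False below by (auto simp: mult.assoc)
  qed
qed

lemma h_mult_inverse_mult_h:
  assumes inverse: "partial_sum UNIV * v = 1"
  shows "i \<in> I \<Longrightarrow> j \<in> I \<Longrightarrow> h i * (v * h j) = (if i = j then h j else 0)"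
  \<comment> \<open>In the expansion of h_i h_j = h_i u v h_j only the terms k = i and k = j survive.\<close>
proof (induction i rule: wf_induct_rule[OF wf])
  case (1 i)
  define a where "a = h i * (v * h j)"
  define b where "b = (if (j, i) \<in> r then h i * h j else 0)"
  have split: "h i * h k * (v * h j) = (if k = i then a else 0) + (if k = j then b else 0)"
    if "k \<in> I" for k
    unfolding a_def b_def using 1 that by (intro h_mult_h_mult_eq) auto
  have "sums_to U (\<lambda>k. h i * h k * (v * h j)) I (h i * partial_sum UNIV * (v * h j))"
    by (intro sums_to_mult_left sums_to_mult_right sums_to_h)
  moreover have "h i * partial_sum UNIV * (v * h j) = h i * h j"
    using inverse by (metis mult.assoc mult_1_left)
  ultimately have
    "sums_to U (\<lambda>k. (if k = i then a else 0) + (if k = j then b else 0)) I (h i * h j)"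
    using sums_to_cong[of I "\<lambda>k. h i * h k * (v * h j)"
        "\<lambda>k. (if k = i then a else 0) + (if k = j then b else 0)" U "h i * h j", OF split]
    by simp
  moreover have "sums_to U (\<lambda>k. (if k = i then a else 0) + (if k = j then b else 0)) I (a + b)"
    using 1 by (intro sums_to_add sums_to_delta)
  ultimately have "h i * h j = a + b"
    by (rule sums_to_unique)
  then show ?case
    using h_idem[of i] h_triangular[of i j] r_total[of i j] 1 wf_not_refl[OF wf, of i]
    by (auto simp: a_def b_def split: if_splits)
qed

lemma exchange_decomposition:
  assumes "dedekind_finite TYPE('a)"
  shows "\<exists>e. (\<forall>i\<in>I. \<exists>c. e i = c * x i) \<and> (\<forall>i\<in>I. e i * e i = e i) \<and>
    (\<forall>i\<in>I. \<forall>j\<in>I. i \<noteq> j \<longrightarrow> e i * e j = 0) \<and> sums_to U e I 1"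
proof -
  obtain v where left_inverse: "v * partial_sum UNIV = 1"
    using one_mem_partial_sum unfolding principal_left_ideal_iff by metis
  then have "partial_sum UNIV * v = 1"
    using assms by (simp add: dedekind_finite_def)
  then have "(v * h i) * (v * h j) = (if i = j then v * h j else 0)" if "i \<in> I" "j \<in> I" for i j
    using h_mult_inverse_mult_h[OF _ that] by (simp add: mult.assoc)
  moreover have "\<exists>c. v * h i = c * x i" for i
    using h_mem[of i] unfolding principal_left_ideal_iff by (metis mult.assoc)
  moreover have "sums_to U (\<lambda>i. v * h i) I 1"
    using sums_to_mult_left[OF sums_to_h, of v] left_inverse by simp
  ultimately show ?thesis
    by (intro exI[of _ "\<lambda>i. v * h i"]) auto
qed

end

lemma ex_wf_total: "\<exists>r :: ('i \<times> 'i) set. wf r \<and> total r"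
proof -
  obtain w :: "('i \<times> 'i) set" where "well_order_on UNIV w"
    using well_order_on by blast
  then have "wf (w - Id)" and "total (w - Id)"
    using strict_linear_order_on_diff_Id
    by (auto simp: well_order_on_def strict_linear_order_on_def)
  then show ?thesis by blast
qed

theorem theorem2:
  fixes U :: "'a::ring_1 set set"
  assumes "nice_idx U TYPE('a set \<times> nat)"
    and "nice_idx U TYPE('i)"
    and "dedekind_finite TYPE('a)"
    and "vn_regular TYPE('a)"
  shows "exchange_idx U TYPE('i)"
proof -
  \<comment> \<open>Niceness for the index type 'a set \<times> nat is not needed.\<close>
  obtain r :: "('i \<times> 'i) set" where "wf r" and "total r"
    using ex_wf_total by blast
  then show ?thesis
    unfolding exchange_idx_def using exchange_decomposition[OF assms(2,4)] assms(3) by blast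
qed

end
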